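(* Fix $k\in[n]$ and arbitrary negotiating positions $\mu_i'\in\mathbb{R}^n$ for $i\neq k$. Then $\sup_{\mu_k'\in\mathbb{R}^n} g_k(W',P')<\infty$, where $(W',P')$ is the stable point for the matrix $M'$ with columns $\mu_1',\dots,\mu_n'$. That is, no choice of negotiating position gives agent $k$ unbounded utility, even with full knowledge of the other agents' beliefs and positions.
   Context: Fix agents $[n]=\{1,\dots,n\}$. Let $\Sigma\in\mathbb{R}^{n\times n}$ be symmetric positive definite, $\Gamma=\mathrm{diag}(\gamma_1,\dots,\gamma_n)$ with all $\gamma_i>0$, and let $M\in\mathbb{R}^{n\times n}$ be the matrix of true beliefs with $i$-th column $\mu_i=Me_i$. For a matrix of reported negotiating positions $M'\in\mathbb{R}^{n\times n}$, the stable point for $M'$ is the unique pair $(W,P)$ of real $n\times n$ matrices with $W=W^T$, $P^T=-P$ and $M'-P=2\Sigma W\Gamma$; equivalently $\mathrm{vec}(W)=\tfrac12(\Gamma\otimes\Sigma+\Sigma\otimes\Gamma)^{-1}\mathrm{vec}(M'+M'^T)$ and $P=M'-2\Sigma W\Gamma$. Here $\mathrm{vec}$ stacks columns and $e_i$ is the $i$-th standard basis vector. Agent $i$'s (true) utility at $(W,P)$ is $g_i(W,P)=w_i^T(\mu_i-Pe_i)-\gamma_i\, w_i^T\Sigma w_i$, where $w_i=We_i$. *)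

theory Defs
  imports "HOL-Analysis.Analysis"
begin

text \<open>n x n real matrices are modelled as real^'n^'n, with agents indexed by the finite type 'n.\<close>

definition sym_posdef :: "real^'n^'n \<Rightarrow> bool" where
  "sym_posdef S \<longleftrightarrow> transpose S = S \<and> (\<forall>x. x \<noteq> 0 \<longrightarrow> x \<bullet> (S *v x) > 0)"

definition diag_mat :: "('n::finite \<Rightarrow> real) \<Rightarrow> real^'n^'n" where
  "diag_mat g = (\<chi> i j. if i = j then g i else 0)"

definition is_stable_point :: "real^'n^'n \<Rightarrow> real^'n^'n \<Rightarrow> real^'n^'n \<Rightarrow> real^'n^'n \<Rightarrow> real^'n^'n \<Rightarrow> bool" where
  "is_stable_point S G M' W P \<longleftrightarrow>
     transpose W = W \<and> transpose P = - P \<and> M' - P = 2 *\<^sub>R (S ** W ** G)"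

definition stable_point :: "real^'n^'n \<Rightarrow> real^'n^'n \<Rightarrow> real^'n^'n \<Rightarrow> (real^'n^'n) \<times> (real^'n^'n)" where
  "stable_point S G M' = (THE (W, P). is_stable_point S G M' W P)"

definition utility :: "real^'n^'n \<Rightarrow> ('n \<Rightarrow> real) \<Rightarrow> real^'n^'n \<Rightarrow> 'n \<Rightarrow> (real^'n^'n) \<times> (real^'n^'n) \<Rightarrow> real" where
  "utility S g M i WP = (let W = fst WP; P = snd WP; w = column i W in
     w \<bullet> (column i M - column i P) - g i * (w \<bullet> (S *v w)))"

definition set_column :: "'n \<Rightarrow> real^'n \<Rightarrow> real^'n^'n \<Rightarrow> real^'n^'n" where
  "set_column k m A = (\<chi> r j. if j = k then m $ r else A $ r $ j)"

end

theory Submission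
  imports Defs
begin

text \<open>At the stable point \<open>(W, P)\<close> for \<open>M'\<close>, symmetry of \<open>W\<close> and skew-symmetry of \<open>P\<close> give
  \<open>\<langle>W, M'\<rangle> = 2 \<Sum>\<^sub>j \<gamma>\<^sub>j w\<^sub>j\<^sup>T \<Sigma> w\<^sub>j\<close>, while agent \<open>k\<close>'s utility equals
  \<open>w\<^sub>k\<^sup>T (\<mu>\<^sub>k - \<mu>'\<^sub>k) + \<gamma>\<^sub>k w\<^sub>k\<^sup>T \<Sigma> w\<^sub>k\<close>. Combining the two eliminates the report \<open>\<mu>'\<^sub>k\<close>:
  the utility is at most \<open>\<Sum>\<^sub>j (w\<^sub>j\<^sup>T b\<^sub>j - \<gamma>\<^sub>j w\<^sub>j\<^sup>T \<Sigma> w\<^sub>j)\<close>, where \<open>b\<^sub>j\<close> are the columns of \<open>M'\<close>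
  with \<open>\<mu>'\<^sub>k\<close> replaced by \<open>\<mu>\<^sub>k\<close>. Each summand is a concave quadratic in \<open>w\<^sub>j\<close>, bounded by
  \<open>|b\<^sub>j|\<^sup>2 / (4 \<gamma>\<^sub>j \<lambda>)\<close> with \<open>\<lambda>\<close> the least eigenvalue of \<open>\<Sigma>\<close>, whatever \<open>\<mu>'\<^sub>k\<close> is.\<close>

lemma inner_matrix_columns:
  "(A::real^'n^'m) \<bullet> B = (\<Sum>j\<in>UNIV. column j A \<bullet> column j B)"
  unfolding column_def inner_vec_def vec_lambda_beta inner_real_def by (rule sum.swap)

lemma inner_transpose_transpose: "transpose (A::real^'n^'m) \<bullet> transpose B = A \<bullet> B"
  unfolding inner_vec_def transpose_def vec_lambda_beta inner_real_def by (rule sum.swap)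

lemma inner_sym_skew_eq_0:
  assumes "transpose (W::real^'n^'n) = W" "transpose P = - P"
  shows "W \<bullet> P = 0"
proof -
  have "W \<bullet> P = transpose W \<bullet> transpose P" by (simp add: inner_transpose_transpose)
  also have "\<dots> = - (W \<bullet> P)" using assms by simp
  finally show ?thesis by simp
qed

lemma transpose_add: "transpose (A + B) = transpose A + transpose (B::real^'n^'m)"
  by (simp add: transpose_def vec_eq_iff)

lemma transpose_diff: "transpose (A - B) = transpose A - transpose (B::real^'n^'m)"
  by (simp add: transpose_def vec_eq_iff)

lemma matrix_add_rdistrib: "(B + C) ** A = B ** A + C ** (A::real^'p^'n)"
  for B C :: "real^'n^'m"
  by (vector matrix_matrix_mult_def sum.distrib[symmetric] field_simps)

lemma transpose_diag_mat [simp]: "transpose (diag_mat g) = diag_mat g"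
  by (simp add: transpose_def diag_mat_def vec_eq_iff)

lemma column_diff: "column j (A - B) = column j A - column j (B::real^'n^'m)"
  by (simp add: column_def vec_eq_iff)

lemma column_scaleR: "column j (c *\<^sub>R A) = c *\<^sub>R column j (A::real^'n^'m)"
  by (simp add: column_def vec_eq_iff)

lemma column_matrix_mult: "column j ((A::real^'n^'m) ** B) = A *v column j B"
  by (simp add: column_def matrix_matrix_mult_def matrix_vector_mult_def vec_eq_iff)

lemma column_mult_diag_mat: "column j ((A::real^'n^'m) ** diag_mat g) = g j *\<^sub>R column j A"
  by (simp add: column_def matrix_matrix_mult_def diag_mat_def vec_eq_iff
      if_distrib if_distribR cong: if_cong)

lemma column_set_column: "column j (set_column k v A) = (if j = k then v else column j A)"
  by (simp add: column_def set_column_def vec_eq_iff)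

lemma set_column_set_column: "set_column k v (set_column k w A) = set_column k v A"
  by (simp add: set_column_def vec_eq_iff)

lemma inner_set_column:
  "A \<bullet> set_column k v B = A \<bullet> B + column k A \<bullet> (v - column k B)"
proof -
  have "A \<bullet> set_column k v B - A \<bullet> B = (\<Sum>j\<in>UNIV. column j A \<bullet> (column j (set_column k v B) - column j B))"
    by (simp add: inner_matrix_columns sum_subtractf inner_diff_right)
  also have "\<dots> = column k A \<bullet> (v - column k B)"
    by (simp add: column_set_column if_distrib if_distribR cong: if_cong)
  finally show ?thesis by simp
qed

lemma column_sandwich_diag_mat:
  "column j ((S::real^'n^'m) ** W ** diag_mat g) = g j *\<^sub>R (S *v column j W)"
  unfolding column_mult_diag_mat by (simp add: column_matrix_mult)

lemma inner_mult_diag_mat: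
  "(W::real^'n^'n) \<bullet> (S ** W ** diag_mat g) = (\<Sum>j\<in>UNIV. g j * (column j W \<bullet> (S *v column j W)))"
  by (simp add: inner_matrix_columns column_sandwich_diag_mat)

lemma sym_posdef_transpose: "sym_posdef S \<Longrightarrow> transpose S = S"
  by (simp add: sym_posdef_def)

lemma sym_posdef_quadratic_nonneg: "sym_posdef S \<Longrightarrow> 0 \<le> (x::real^'n) \<bullet> (S *v x)"
  unfolding sym_posdef_def by (cases "x = 0") (auto intro: less_imp_le)

lemma sym_posdef_quadratic_eq_0: "sym_posdef S \<Longrightarrow> (x::real^'n) \<bullet> (S *v x) = 0 \<longleftrightarrow> x = 0"
  unfolding sym_posdef_def by (metis inner_zero_left less_irrefl)

lemma sym_posdef_quadratic_coercive:
  fixes S :: "real^'n^'n"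
  assumes "sym_posdef S"
  obtains l where "l > 0" "\<And>x. l * (norm x)\<^sup>2 \<le> x \<bullet> (S *v x)"
proof -
  let ?q = "\<lambda>x::real^'n. x \<bullet> (S *v x)"
  have "continuous_on (sphere 0 1) ?q"
    by (intro continuous_intros linear_continuous_on matrix_vector_mul_bounded_linear)
  moreover have "sphere (0::real^'n) 1 \<noteq> {}" by simp
  ultimately obtain x0 where x0: "x0 \<in> sphere 0 1" and min: "\<And>y. y \<in> sphere 0 1 \<Longrightarrow> ?q x0 \<le> ?q y"
    using continuous_attains_inf[OF compact_sphere] by blast
  have "?q x0 * (norm x)\<^sup>2 \<le> ?q x" for x
  proof (cases "x = 0")
    case False
    have "?q x0 \<le> ?q ((1 / norm x) *\<^sub>R x)" using False by (intro min) simp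
    also have "\<dots> = ?q x / (norm x)\<^sup>2"
      by (simp add: matrix_vector_mult_scaleR power2_eq_square)
    finally show ?thesis using False by (simp add: pos_le_divide_eq)
  qed simp
  moreover have "?q x0 > 0"
    using x0 assms unfolding sym_posdef_def by (metis norm_zero mem_sphere_0 zero_neq_one)
  ultimately show ?thesis using that by blast
qed

text \<open>Completing the square in \<open>norm x\<close> bounds a linear term minus a coercive quadratic form.\<close>
lemma linear_minus_coercive_quadratic_le:
  fixes S :: "real^'n^'n"
  assumes "l > 0" "d > 0" and coercive: "\<And>x. l * (norm x)\<^sup>2 \<le> x \<bullet> (S *v x)"
  shows "x \<bullet> b - d * (x \<bullet> (S *v x)) \<le> (norm b)\<^sup>2 / (4 * d * l)"
proof -
  have "x \<bullet> b - d * (x \<bullet> (S *v x)) \<le> norm x * norm b - d * l * (norm x)\<^sup>2"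
  proof -
    have "d * (l * (norm x)\<^sup>2) \<le> d * (x \<bullet> (S *v x))"
      using coercive \<open>d > 0\<close> by simp
    thus ?thesis using norm_cauchy_schwarz[of x b] by simp
  qed
  also have "\<dots> \<le> (norm b)\<^sup>2 / (4 * d * l)"
  proof -
    have "4 * d * l * (norm x * norm b - d * l * (norm x)\<^sup>2) \<le> (norm b)\<^sup>2"
      using zero_le_power2[of "norm b - 2 * d * l * norm x"] by (simp add: power2_eq_square algebra_simps)
    thus ?thesis using assms(1,2) by (simp add: pos_le_divide_eq mult_ac)
  qed
  finally show ?thesis .
qed

definition lyapunov_map :: "real^'n^'n \<Rightarrow> real^'n^'n \<Rightarrow> real^'n^'n \<Rightarrow> real^'n^'n" where
  "lyapunov_map S G W = S ** W ** G + G ** W ** S"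

lemma linear_lyapunov_map: "linear (lyapunov_map S G :: real^'n^'n \<Rightarrow> _)"
proof (rule linearI)
  fix A B :: "real^'n^'n"
  show "lyapunov_map S G (A + B) = lyapunov_map S G A + lyapunov_map S G B"
    by (simp add: lyapunov_map_def matrix_add_ldistrib matrix_add_rdistrib)
next
  fix c and A :: "real^'n^'n"
  show "lyapunov_map S G (c *\<^sub>R A) = c *\<^sub>R lyapunov_map S G A"
    by (simp add: lyapunov_map_def matrix_scalar_ac scalar_matrix_assoc scaleR_right_distrib)
qed

lemma transpose_sandwich:
  "transpose S = S \<Longrightarrow> transpose G = G \<Longrightarrow> transpose (S ** W ** G) = G ** transpose W ** (S::real^'n^'n)"
  by (simp add: matrix_transpose_mul matrix_mul_assoc)

lemma transpose_lyapunov_map: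
  assumes "transpose S = S" "transpose G = G"
  shows "transpose (lyapunov_map S G W) = lyapunov_map S G (transpose W)"
  using assms by (simp add: lyapunov_map_def transpose_add transpose_sandwich add.commute)

lemma inner_lyapunov_map_diag_mat:
  assumes "transpose S = S"
  shows "W \<bullet> lyapunov_map S (diag_mat g) W
    = (\<Sum>j\<in>UNIV. g j * (column j W \<bullet> (S *v column j W)))
    + (\<Sum>j\<in>UNIV. g j * (column j (transpose W) \<bullet> (S *v column j (transpose W))))"
proof -
  have "W \<bullet> (diag_mat g ** W ** S) = transpose W \<bullet> (S ** transpose W ** diag_mat g)"
    using assms inner_transpose_transpose[of W "diag_mat g ** W ** S"]
    by (simp add: transpose_sandwich)
  then show ?thesis by (simp add: lyapunov_map_def inner_add_right inner_mult_diag_mat)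
qed

lemma inj_lyapunov_map:
  fixes S :: "real^'n^'n"
  assumes S: "sym_posdef S" and g: "\<And>i. g i > 0"
  shows "inj (lyapunov_map S (diag_mat g))"
proof (rule linear_injective_0[OF linear_lyapunov_map, THEN iffD2], intro allI impI)
  fix W
  define f where "f V = (\<Sum>j\<in>UNIV. g j * (column j V \<bullet> (S *v column j V)))" for V :: "real^'n^'n"
  have terms_nonneg: "0 \<le> g j * (column j V \<bullet> (S *v column j V))" for j V
    using g[of j] sym_posdef_quadratic_nonneg[OF S] by simp
  then have f_nonneg: "0 \<le> f V" for V by (simp add: f_def sum_nonneg)
  assume "lyapunov_map S (diag_mat g) W = 0"
  then have "f W + f (transpose W) = 0"
    using inner_lyapunov_map_diag_mat[OF sym_posdef_transpose[OF S], of W g] by (simp add: f_def)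
  then have "f W = 0" by (simp add: add_nonneg_eq_0_iff f_nonneg)
  then have "column j W \<bullet> (S *v column j W) = 0" for j
    using terms_nonneg g[of j] by (simp add: f_def sum_nonneg_eq_0_iff) (metis less_irrefl)
  then have "column j W = 0" for j
    using sym_posdef_quadratic_eq_0[OF S] by blast
  then show "W = 0" by (simp add: vec_eq_iff column_def)
qed

lemma surj_lyapunov_map:
  fixes S :: "real^'n^'n"
  shows "sym_posdef S \<Longrightarrow> (\<And>i. g i > 0) \<Longrightarrow> surj (lyapunov_map S (diag_mat g))"
  by (simp add: linear_injective_imp_surjective linear_lyapunov_map inj_lyapunov_map)

lemma is_stable_point_iff:
  assumes "transpose S = S" "transpose G = G"
  shows "is_stable_point S G M' W P \<longleftrightarrow>
    transpose W = W \<and> 2 *\<^sub>R lyapunov_map S G W = M' + transpose M' \<and>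
    P = M' - 2 *\<^sub>R (S ** W ** G)"
proof (cases "transpose W = W \<and> P = M' - 2 *\<^sub>R (S ** W ** G)")
  case True
  then have "transpose P = transpose M' - 2 *\<^sub>R (G ** W ** S)"
    using assms by (simp add: transpose_diff transpose_scalar transpose_sandwich)
  then have "transpose P = - P \<longleftrightarrow>
      transpose M' - 2 *\<^sub>R (G ** W ** S) = - (M' - 2 *\<^sub>R (S ** W ** G))"
    using True by simp
  also have "\<dots> \<longleftrightarrow> 2 *\<^sub>R lyapunov_map S G W = M' + transpose M'"
    unfolding lyapunov_map_def by (auto simp: algebra_simps)
  finally show ?thesis using True by (auto simp: is_stable_point_def)
next
  case False
  then show ?thesis by (auto simp: is_stable_point_def diff_eq_eq eq_diff_eq add.commute)
qed

lemma ex1_stable_point: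
  fixes S :: "real^'n^'n"
  assumes S: "sym_posdef S" and g: "\<And>i. g i > 0"
  shows "\<exists>!(W, P). is_stable_point S (diag_mat g) M' W P"
proof -
  let ?L = "lyapunov_map S (diag_mat g)"
  have St: "transpose S = S" using S by (rule sym_posdef_transpose)
  have inj: "inj ?L" using S g by (rule inj_lyapunov_map)
  have "surj ?L" using S g by (rule surj_lyapunov_map)
  define W where "W = inv ?L ((1/2) *\<^sub>R (M' + transpose M'))"
  have W: "2 *\<^sub>R ?L W = M' + transpose M'"
    by (simp add: W_def surj_f_inv_f[OF \<open>surj ?L\<close>])
  have "transpose (2 *\<^sub>R ?L W) = 2 *\<^sub>R ?L W"
    unfolding W by (simp add: transpose_add add.commute)
  then have "?L (transpose W) = ?L W"
    using St by (simp add: transpose_scalar transpose_lyapunov_map)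
  then have "transpose W = W" by (rule injD[OF inj])
  with W have "is_stable_point S (diag_mat g) M' W (M' - 2 *\<^sub>R (S ** W ** diag_mat g))"
    using St by (simp add: is_stable_point_iff)
  moreover have "W1 = W2 \<and> P1 = P2"
    if "is_stable_point S (diag_mat g) M' W1 P1" "is_stable_point S (diag_mat g) M' W2 P2"
    for W1 P1 W2 P2
  proof -
    have "2 *\<^sub>R ?L W1 = 2 *\<^sub>R ?L W2" using that St by (simp add: is_stable_point_iff)
    then have "W1 = W2" by (simp add: injD[OF inj])
    then show ?thesis using that St by (simp add: is_stable_point_iff)
  qed
  ultimately show ?thesis by blast
qed

lemma is_stable_point_stable_point:
  fixes S :: "real^'n^'n"
  assumes "sym_posdef S" "\<And>i. g i > 0" "stable_point S (diag_mat g) M' = (W, P)"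
  shows "is_stable_point S (diag_mat g) M' W P"
proof -
  have "\<exists>!(W, P). is_stable_point S (diag_mat g) M' W P"
    using assms(1,2) by (rule ex1_stable_point)
  from theI'[OF this] show ?thesis using assms(3) by (simp add: stable_point_def)
qed

lemma inner_stable_point:
  assumes "is_stable_point S G M' W P"
  shows "W \<bullet> M' = 2 * (W \<bullet> (S ** W ** G))"
proof -
  have "M' = P + 2 *\<^sub>R (S ** W ** G)" and "W \<bullet> P = 0"
    using assms inner_sym_skew_eq_0 by (auto simp: is_stable_point_def algebra_simps)
  then show ?thesis by (simp add: inner_add_right)
qed

lemma utility_stable_point:
  assumes "is_stable_point S (diag_mat g) M' W P"
  shows "utility S g M k (W, P)
    = column k W \<bullet> (column k M - column k M') + g k * (column k W \<bullet> (S *v column k W))"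
proof -
  have "P = M' - 2 *\<^sub>R (S ** W ** diag_mat g)"
    using assms by (auto simp: is_stable_point_def diff_eq_eq eq_diff_eq add.commute)
  then have "column k P = column k M' - (2 * g k) *\<^sub>R (S *v column k W)"
    by (simp add: column_diff column_scaleR column_sandwich_diag_mat)
  then show ?thesis
    by (simp add: utility_def Let_def inner_diff_right inner_scaleR_right)
qed

lemma utility_stable_point_le:
  fixes S :: "real^'n^'n"
  assumes S: "sym_posdef S" and g: "\<And>i. g i > 0"
    and stable: "is_stable_point S (diag_mat g) M' W P"
  shows "utility S g M k (W, P) \<le> (\<Sum>j\<in>UNIV.
    column j W \<bullet> column j (set_column k (column k M) M') - g j * (column j W \<bullet> (S *v column j W)))"
proof -
  define q where "q j = g j * (column j W \<bullet> (S *v column j W))" for j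
  have "(\<Sum>j\<in>UNIV. column j W \<bullet> column j (set_column k (column k M) M'))
      = W \<bullet> M' + column k W \<bullet> (column k M - column k M')"
    by (simp add: inner_set_column flip: inner_matrix_columns)
  also have "W \<bullet> M' = 2 * sum q UNIV"
    using inner_stable_point[OF stable] by (simp add: q_def inner_mult_diag_mat)
  finally have "(\<Sum>j\<in>UNIV. column j W \<bullet> column j (set_column k (column k M) M') - q j)
      = sum q UNIV + column k W \<bullet> (column k M - column k M')"
    by (simp add: sum_subtractf)
  moreover have "q k \<le> sum q UNIV"
    using g sym_posdef_quadratic_nonneg[OF S]
    by (intro member_le_sum) (auto simp: q_def less_imp_le)
  ultimately show ?thesis
    using utility_stable_point[OF stable] by (simp add: q_def)
qed

lemma utility_stable_point_bound:
  fixes S :: "real^'n^'n"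
  assumes "sym_posdef S" and g: "\<And>i. g i > 0"
    and "is_stable_point S (diag_mat g) M' W P"
    and l: "l > 0" and coercive: "\<And>x. l * (norm x)\<^sup>2 \<le> x \<bullet> (S *v x)"
  shows "utility S g M k (W, P)
    \<le> (\<Sum>j\<in>UNIV. (norm (column j (set_column k (column k M) M')))\<^sup>2 / (4 * g j * l))"
proof -
  have "utility S g M k (W, P) \<le> (\<Sum>j\<in>UNIV.
      column j W \<bullet> column j (set_column k (column k M) M') - g j * (column j W \<bullet> (S *v column j W)))"
    using assms(1-3) by (rule utility_stable_point_le)
  also have "\<dots> \<le> (\<Sum>j\<in>UNIV. (norm (column j (set_column k (column k M) M')))\<^sup>2 / (4 * g j * l))"
    using l g coercive by (intro sum_mono linear_minus_coercive_quadratic_le)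
  finally show ?thesis .
qed

theorem mainTheorem5:
  fixes S :: "real^'n^'n" and g :: "'n \<Rightarrow> real" and M :: "real^'n^'n"
    and M0 :: "real^'n^'n" and k :: 'n
  assumes "sym_posdef S"
    and "\<And>i. g i > 0"
  shows "bdd_above ((\<lambda>m. utility S g M k (stable_point S (diag_mat g) (set_column k m M0))) ` UNIV)"
proof -
  obtain l where l: "l > 0" and coercive: "\<And>x. l * (norm x)\<^sup>2 \<le> x \<bullet> (S *v x)"
    using sym_posdef_quadratic_coercive[OF assms(1)] by blast
  have "utility S g M k (stable_point S (diag_mat g) (set_column k m M0))
      \<le> (\<Sum>j\<in>UNIV. (norm (column j (set_column k (column k M) M0)))\<^sup>2 / (4 * g j * l))" for m
  proof -
    obtain W P where WP: "stable_point S (diag_mat g) (set_column k m M0) = (W, P)"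
      by fastforce
    then have "is_stable_point S (diag_mat g) (set_column k m M0) W P"
      using assms by (intro is_stable_point_stable_point)
    with assms l coercive have "utility S g M k (W, P) \<le> (\<Sum>j\<in>UNIV.
        (norm (column j (set_column k (column k M) (set_column k m M0))))\<^sup>2 / (4 * g j * l))"
      by (intro utility_stable_point_bound)
    with WP show ?thesis by (simp add: set_column_set_column)
  qed
  then show ?thesis by (rule bdd_aboveI2)
qed

end
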